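(* Let $X$ be well ordered, $\Omega=\{D\}$ with $D$ unary, $\lambda\in K$, and order $\mathfrak{S}(X)$ by order $(2)$. Then $$S=\{D(xy)-D(x)y-xD(y)-\lambda D(x)D(y)\mid x,y\in\mathfrak{S}(X)\}$$ is a Gröbner–Shirshov basis in $K\langle X;D\rangle$.
   Context: General setup (here $\Omega=\{D\}$). $K$ is a commutative ring with unit; $S(Y)$ is the free semigroup on $Y$. $\mathfrak{S}_0=S(X)$, $\mathfrak{S}_n=S(X\cup\{D(u)\mid u\in\mathfrak{S}_{n-1}\})$, $\mathfrak{S}(X)=\bigcup_n\mathfrak{S}_n$; $K\langle X;D\rangle$ is the free $K$-module on $\mathfrak{S}(X)$ with concatenation product and $D$ extended linearly. Prime words are elements of $X\cup\{D(u)\}$; $bre(u)$ is the number of prime factors. $\mathfrak{S}^\star(X)$: words on $X\cup\{\star\}$ with exactly one $\star$; $u|_s$: substitution. Monomial ordering: well order with $w>v\Rightarrow u|_w>u|_v$. $\bar f$ = leading word, monic = leading coefficient $1$. Compositions of monic $f,g$: intersection $(f,g)_w=fa-bg$ when $w=\bar fa=b\bar g$, $a,b\in\mathfrak{S}(X)$, $bre(w)<bre(\bar f)+bre(\bar g)$; including $(f,g)_w=f-u|_g$ when $w=\bar f=u|_{\bar g}$, $u\in\mathfrak{S}^\star(X)$. $p\equiv q\ \mathrm{mod}(S,w)$ means $p-q=\sum\alpha_iu_i|_{s_i}$, $s_i\in S$, $u_i|_{\overline{s_i}}<w$. $S$ is a Gröbner–Shirshov basis if all its compositions are $\equiv0\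 \mathrm{mod}(S,w)$. Order (2): each $u\in\mathfrak{S}(X)$ is uniquely $u=u_1\cdots u_n$ with $u_i\in X\cup D(\mathfrak{S}(X))$; $deg_X(u)$ is the number of occurrences of letters of $X$ in $u$; $wt(u)=(deg_X(u),u_1,\dots,u_n)$, and $u>v$ iff $wt(u)>wt(v)$ lexicographically, where prime words are compared by: for $x,y\in X$, $x>y$ per the order on $X$; $D(u')>x$ for all $x\in X$; $D(u')>D(v')$ iff $u'>v'$. *)

theory Defs
  imports Main "HOL-Library.Function_Algebras"
begin

text \<open>Prime words: a letter of X, or D(u) for a word u. A word of the free operated
semigroup is represented as the (nonempty) list of its prime factors u = u1...un.\<close>

datatype 'x prim = Lt 'x | Dp "'x prim list"

fun wfp :: "'x prim \<Rightarrow> bool" where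
  "wfp (Lt x) = True"
| "wfp (Dp us) = (us \<noteq> [] \<and> (\<forall>p\<in>set us. wfp p))"

definition is_word :: "'x prim list \<Rightarrow> bool" where
  "is_word us \<longleftrightarrow> us \<noteq> [] \<and> (\<forall>p\<in>set us. wfp p)"

fun degp :: "'x prim \<Rightarrow> nat" where
  "degp (Lt x) = 1"
| "degp (Dp us) = sum_list (map degp us)"

definition degw :: "'x prim list \<Rightarrow> nat" where
  "degw us = sum_list (map degp us)"

text \<open>Order (2): u > v iff wt(u) > wt(v) lexicographically, wt(u) = (deg_X u, u1,...,un).\<close>
fun prim_less :: "'x::wellorder prim \<Rightarrow> 'x prim \<Rightarrow> bool"
and list_lex :: "'x::wellorder prim list \<Rightarrow> 'x prim list \<Rightarrow> bool" where
  "prim_less (Lt x) (Lt y) = (x < y)"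
| "prim_less (Lt x) (Dp vs) = True"
| "prim_less (Dp us) (Lt y) = False"
| "prim_less (Dp us) (Dp vs) =
     (sum_list (map degp us) < sum_list (map degp vs) \<or>
      (sum_list (map degp us) = sum_list (map degp vs) \<and> list_lex us vs))"
| "list_lex [] [] = False"
| "list_lex [] (v # vs) = True"
| "list_lex (u # us) [] = False"
| "list_lex (u # us) (v # vs) = (prim_less u v \<or> (u = v \<and> list_lex us vs))"

definition word_less :: "'x::wellorder prim list \<Rightarrow> 'x prim list \<Rightarrow> bool" where
  "word_less u v \<longleftrightarrow> degw u < degw v \<or> (degw u = degw v \<and> list_lex u v)"

text \<open>Words on X \<union> {\<star>}; the letter None plays the role of \<star>.\<close>
fun nstar :: "'x option prim \<Rightarrow> nat" where
  "nstar (Lt None) = 1"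
| "nstar (Lt (Some x)) = 0"
| "nstar (Dp us) = sum_list (map nstar us)"

definition star_word :: "'x option prim list \<Rightarrow> bool" where
  "star_word u \<longleftrightarrow> is_word u \<and> sum_list (map nstar u) = 1"

fun subst_p :: "'x option prim \<Rightarrow> 'x prim list \<Rightarrow> 'x prim list" where
  "subst_p (Lt None) s = s"
| "subst_p (Lt (Some x)) s = [Lt x]"
| "subst_p (Dp us) s = [Dp (concat (map (\<lambda>p. subst_p p s) us))]"

definition subst :: "'x option prim list \<Rightarrow> 'x prim list \<Rightarrow> 'x prim list" where
  "subst u s = concat (map (\<lambda>p. subst_p p s) u)"

text \<open>Elements are functions from words to K with finite support (coefficient maps).\<close>
type_synonym ('x, 'k) opoly = "'x prim list \<Rightarrow> 'k"

definition supp :: "('x, 'k::zero) opoly \<Rightarrow> 'x prim list set" where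
  "supp f = {u. f u \<noteq> 0}"

definition single :: "'x prim list \<Rightarrow> 'k::zero \<Rightarrow> ('x, 'k) opoly" where
  "single u c = (\<lambda>v. if v = u then c else 0)"

definition smult :: "'k::times \<Rightarrow> ('x, 'k) opoly \<Rightarrow> ('x, 'k) opoly" where
  "smult c f = (\<lambda>w. c * f w)"

definition pmul :: "('x, 'k::comm_ring_1) opoly \<Rightarrow> ('x, 'k) opoly \<Rightarrow> ('x, 'k) opoly" where
  "pmul f g = (\<lambda>w. \<Sum>(u, v)\<in>{(u, v). u \<in> supp f \<and> v \<in> supp g \<and> u @ v = w}. f u * g v)"

definition Dlin :: "('x, 'k::zero) opoly \<Rightarrow> ('x, 'k) opoly" where
  "Dlin f = (\<lambda>w. case w of [Dp u] \<Rightarrow> f u | _ \<Rightarrow> 0)"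

definition psubst :: "'x option prim list \<Rightarrow> ('x, 'k::comm_ring_1) opoly \<Rightarrow> ('x, 'k) opoly" where
  "psubst u f = (\<lambda>w. \<Sum>v\<in>{v \<in> supp f. subst u v = w}. f v)"

definition lead :: "('x::wellorder, 'k::zero) opoly \<Rightarrow> 'x prim list" where
  "lead f = (THE w. f w \<noteq> 0 \<and> (\<forall>v. f v \<noteq> 0 \<longrightarrow> v \<noteq> w \<longrightarrow> word_less v w))"

definition cong_mod ::
  "('x::wellorder, 'k::comm_ring_1) opoly set \<Rightarrow> 'x prim list \<Rightarrow> ('x, 'k) opoly \<Rightarrow> ('x, 'k) opoly \<Rightarrow> bool" where
  "cong_mod S w p q \<longleftrightarrow>
     (\<exists>l :: ('k \<times> 'x option prim list \<times> ('x, 'k) opoly) list.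
        (\<forall>(\<alpha>, u, s)\<in>set l. s \<in> S \<and> star_word u \<and> word_less (subst u (lead s)) w) \<and>
        p - q = sum_list (map (\<lambda>(\<alpha>, u, s). smult \<alpha> (psubst u s)) l))"

definition GSB :: "('x::wellorder, 'k::comm_ring_1) opoly set \<Rightarrow> bool" where
  "GSB S \<longleftrightarrow>
     (\<forall>f\<in>S. \<forall>g\<in>S.
        (\<forall>w a b. is_word a \<and> is_word b \<and> w = lead f @ a \<and> w = b @ lead g \<and>
            length w < length (lead f) + length (lead g) \<longrightarrow>
            cong_mod S w (pmul f (single a 1) - pmul (single b 1) g) 0) \<and>
        (\<forall>u. star_word u \<and> lead f = subst u (lead g) \<longrightarrow>
            cong_mod S (lead f) (f - psubst u g) 0))"

definition drel :: "'k::comm_ring_1 \<Rightarrow> 'x prim list \<Rightarrow> 'x prim list \<Rightarrow> ('x, 'k) opoly" where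
  "drel lam x y =
     Dlin (pmul (single x 1) (single y 1))
     - pmul (Dlin (single x 1)) (single y 1)
     - pmul (single x 1) (Dlin (single y 1))
     - smult lam (pmul (Dlin (single x 1)) (Dlin (single y 1)))"

end

theory Submission
  imports Defs
begin

text \<open>
  The leading word of the relation for \<open>x, y\<close> is the prime word \<open>D(xy)\<close> (all other words
  have a first prime factor of smaller degree).  Hence there are no intersection
  compositions, and an inclusion \<open>D(xy) = u|_{D(x'y')}\<close> has either \<open>u = \<star>\<close>, where \<open>xy = x'y'\<close>
  and the composition reduces via the relations for overlapping factors, or
  \<open>u = D(v\<^sub>1v\<^sub>2)\<close> with the star in \<open>x\<close> or \<open>y\<close>, where one explicit identity, valid
  wherever the star lies, expresses the composition through six substitutions of
  relations.
\<close>

section \<open>Words, degree and the order (2)\<close>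

lemma degp_pos: "wfp p \<Longrightarrow> 1 \<le> degp p"
  by (induction p) (auto simp: neq_Nil_conv, fastforce)

lemma degw_pos: "is_word x \<Longrightarrow> 1 \<le> degw x"
  by (auto simp: is_word_def degw_def neq_Nil_conv dest!: degp_pos)

text \<open>Order (2) is a strict order: comparison of prime words and of their lists is
  asymmetric.  This makes the leading word of a polynomial unique.\<close>

lemma prim_less_asym:
  fixes p q :: "'x::wellorder prim" and us vs :: "'x prim list"
  shows "prim_less p q \<Longrightarrow> \<not> prim_less q p"
    "list_lex us vs \<Longrightarrow> \<not> list_lex vs us"
  by (induction p q and us vs rule: prim_less_list_lex.induct) auto

lemma word_less_asym: "word_less v w \<Longrightarrow> \<not> word_less w v"
  unfolding word_less_def using prim_less_asym(2) by auto

lemma word_less_irrefl: "\<not> word_less w w"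
  using word_less_asym by meson

text \<open>Unlike \<open>list_lex\<close>, this
  relation survives arbitrary changes of the tails and multiplication by common factors.\<close>

definition lex_less :: "'x::wellorder prim list \<Rightarrow> 'x prim list \<Rightarrow> bool" where
  "lex_less v w \<longleftrightarrow> (\<exists>c p q r s. v = c @ p # r \<and> w = c @ q # s \<and> prim_less p q)"

lemma list_lex_common_prefix: "prim_less p q \<Longrightarrow> list_lex (c @ p # r) (c @ q # s)"
  by (induction c) auto

lemma lex_less_list_lex: "lex_less v w \<Longrightarrow> list_lex v w"
  unfolding lex_less_def using list_lex_common_prefix by blast

lemma lex_less_context: "lex_less v w \<Longrightarrow> lex_less (a @ v @ b) (a @ w @ d)"
  unfolding lex_less_def by (metis append.assoc append_Cons)

lemma lex_less_Cons: "prim_less p q \<Longrightarrow> lex_less (p # r) (q # s)"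
  unfolding lex_less_def by (metis append_Nil)

lemma word_lessI: "degw v = degw w \<Longrightarrow> lex_less v w \<Longrightarrow> word_less v w"
  unfolding word_less_def using lex_less_list_lex by blast

lemma prim_less_DpI: "degp p < degw w \<Longrightarrow> prim_less p (Dp w)"
  by (cases p) (auto simp: degw_def)

lemma drel_lower_words:
  assumes a: "is_word a" and b: "is_word b"
    and v: "v \<in> {Dp a # b, a @ [Dp b], [Dp a, Dp b]}"
  shows "degw v = degw [Dp (a @ b)] \<and> lex_less v [Dp (a @ b)]"
proof
  show "degw v = degw [Dp (a @ b)]" using v by (auto simp: degw_def)
  have hd_a: "a = hd a # tl a" and "hd a \<in> set a" using a by (auto simp: is_word_def)
  then have "degp (hd a) \<le> degw a" by (simp add: degw_def member_le_sum_list)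
  then have hd_less: "prim_less (hd a) (Dp (a @ b))" and "prim_less (Dp a) (Dp (a @ b))"
    using degw_pos[OF a] degw_pos[OF b] by (auto intro!: prim_less_DpI simp: degw_def)
  then have "lex_less (Dp a # b) [Dp (a @ b)]" "lex_less [Dp a, Dp b] [Dp (a @ b)]"
    by (auto intro: lex_less_Cons)
  moreover have "lex_less (a @ [Dp b]) [Dp (a @ b)]"
    using lex_less_Cons[OF hd_less, of "tl a @ [Dp b]" "[]"] hd_a by (metis append_Cons)
  ultimately show "lex_less v [Dp (a @ b)]" using v by auto
qed

lemma drel_lower_less:
  assumes "is_word a" "is_word b" "v \<in> {Dp a # b, a @ [Dp b], [Dp a, Dp b]}"
  shows "word_less v [Dp (a @ b)]"
  using drel_lower_words[OF assms] word_lessI by blast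

section \<open>Substitution into star words\<close>

lemma subst_Nil[simp]: "subst [] s = []"
  and subst_Cons[simp]: "subst (p # v) s = subst_p p s @ subst v s"
  and subst_append[simp]: "subst (v @ w) s = subst v s @ subst w s"
  and subst_p_Dp[simp]: "subst_p (Dp v) s = [Dp (subst v s)]"
  by (simp_all add: subst_def)

declare subst_p.simps(3)[simp del]

lemma subst_star: "subst [Lt None] w = w"
  by simp

lemma subst_star_free: "sum_list (map nstar v) = 0 \<Longrightarrow> subst v s = subst v s'"
proof -
  have "nstar p = 0 \<Longrightarrow> subst_p p s = subst_p p s'" for p
  proof (induction p)
    case (Lt c) then show ?case by (cases c) auto
  next
    case (Dp us)
    then show ?case by (induction us) auto
  qed
  then show "sum_list (map nstar v) = 0 \<Longrightarrow> subst v s = subst v s'"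
    by (induction v) auto
qed

text \<open>Degree of a substitution (the degree of a star word counts \<open>\<star>\<close> as a letter): each
  \<open>\<star>\<close> is replaced by the degree of the inserted word.\<close>

lemma degw_subst:
  "degw (subst v s) + sum_list (map nstar v) = degw v + sum_list (map nstar v) * degw s"
proof -
  have lists: "degw (subst v s) + sum_list (map nstar v) = degw v + sum_list (map nstar v) * degw s"
    if "\<And>p. p \<in> set v \<Longrightarrow> degw (subst_p p s) + nstar p = degp p + nstar p * degw s" for v
    using that
  proof (induction v)
    case (Cons p v)
    then have "degw (subst_p p s) + nstar p = degp p + nstar p * degw s"
      and "degw (subst v s) + sum_list (map nstar v) = degw v + sum_list (map nstar v) * degw s"
      by simp_all
    then show ?case by (simp add: degw_def algebra_simps)
  qed (simp add: degw_def)
  have "degw (subst_p p s) + nstar p = degp p + nstar p * degw s" for p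
  proof (induction p)
    case (Lt c) then show ?case by (cases c) (auto simp: degw_def)
  next
    case (Dp us) then show ?case using lists[of us] by (simp add: degw_def)
  qed
  then show ?thesis using lists by blast
qed

lemma degw_subst_eq: "degw s = degw s' \<Longrightarrow> degw (subst v s) = degw (subst v s')"
  using degw_subst[of v s] degw_subst[of v s'] by simp

lemma lex_less_subst:
  assumes less: "lex_less s s'" and deg: "degw s = degw s'" and star: "0 < sum_list (map nstar v)"
  shows "lex_less (subst v s) (subst v s')"
proof -
  have lists: "lex_less (subst v s) (subst v s')"
    if "\<And>p. p \<in> set v \<Longrightarrow> 0 < nstar p \<Longrightarrow> lex_less (subst_p p s) (subst_p p s')"
      and "0 < sum_list (map nstar v)" for v
    using that
  proof (induction v)
    case (Cons p v)
    show ?case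
    proof (cases "0 < nstar p")
      case True
      then have "lex_less (subst_p p s) (subst_p p s')" using Cons.prems by simp
      then show ?thesis using lex_less_context[of _ _ "[]"] by simp
    next
      case False
      then have "subst [p] s = subst [p] s'" by (intro subst_star_free) simp
      moreover have "lex_less (subst v s) (subst v s')" using Cons False by simp
      ultimately show ?thesis using lex_less_context[of _ _ "subst_p p s" "[]" "[]"] by simp
    qed
  qed simp
  have "0 < nstar p \<Longrightarrow> lex_less (subst_p p s) (subst_p p s')" for p
  proof (induction p)
    case (Lt c) then show ?case using less by (cases c) auto
  next
    case (Dp us)
    then have "lex_less (subst us s) (subst us s')" using lists[of us] by simp
    moreover have "degw (subst us s) = degw (subst us s')" using degw_subst_eq[OF deg] .
    ultimately have "prim_less (Dp (subst us s)) (Dp (subst us s'))"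
      using lex_less_list_lex by (auto simp: degw_def)
    then show ?case by (simp add: lex_less_Cons)
  qed
  then show ?thesis using lists star by blast
qed

text \<open>Hence substitution into a star word preserves such comparisons in order (2): this is
  the monomial-order property, in the form needed for the compositions below.\<close>

lemma word_less_subst:
  assumes "star_word u" "degw s = degw s'" "lex_less s s'"
  shows "word_less (subst u s) (subst u s')"
  using assms by (intro word_lessI degw_subst_eq lex_less_subst) (simp_all add: star_word_def)

lemma is_word_subst:
  assumes v: "is_word v" and s: "is_word s"
  shows "is_word (subst v s)"
proof -
  have lists: "is_word (subst v s)" if "v \<noteq> []" "\<And>p. p \<in> set v \<Longrightarrow> is_word (subst_p p s)" for v
    using that unfolding subst_def by (cases v) (auto simp: is_word_def)
  have "wfp p \<Longrightarrow> is_word (subst_p p s)" for p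
  proof (induction p)
    case (Lt c) then show ?case using s by (cases c) (auto simp: is_word_def)
  next
    case (Dp us) then show ?case using lists[of us] by (simp add: is_word_def)
  qed
  then show ?thesis using v by (intro lists) (auto simp: is_word_def)
qed

lemma subst_as_map:
  assumes "length s = 1"
  shows "subst v s = map (\<lambda>p. hd (subst_p p s)) v"
proof -
  have "length (subst_p p s) = 1" for p
    using assms by (cases p rule: nstar.cases) auto
  then have single: "subst_p p s = [hd (subst_p p s)]" for p
    by (metis One_nat_def length_0_conv length_Suc_conv list.sel(1))
  show ?thesis by (induction v) (simp_all, metis single)
qed

lemma subst_split:
  assumes s: "length s = 1" and u: "subst u s = x @ y"
  obtains v1 v2 where "u = v1 @ v2" "subst v1 s = x" "subst v2 s = y"
proof -
  note as_map = subst_as_map[OF s]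
  show ?thesis
  proof
    show "u = take (length x) u @ drop (length x) u" by simp
    show "subst (take (length x) u) s = x" "subst (drop (length x) u) s = y"
      using u unfolding as_map take_map[symmetric] drop_map[symmetric] by simp_all
  qed
qed

text \<open>Embedding of ordinary words as star-free words on \<open>X \<union> {\<star>}\<close>; it lets us multiply by
  a fixed word inside a star word.\<close>

fun lift :: "'x prim \<Rightarrow> 'x option prim" where
  "lift (Lt c) = Lt (Some c)"
| "lift (Dp us) = Dp (map lift us)"

lemma lift_props: "subst_p (lift p) s = [p] \<and> nstar (lift p) = 0 \<and> wfp (lift p) = wfp p"
proof (induction p)
  case (Dp us)
  have "subst (map lift us) s = us" "sum_list (map nstar (map lift us)) = 0"
    using Dp by (induction us) auto
  then show ?case using Dp by simp
qed simp

lemma subst_lift[simp]: "subst (map lift w) s = w"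
  by (induction w) (auto simp: lift_props)

section \<open>Linearity of the operations on \<open>K\<langle>X;D\<rangle>\<close>\<close>

abbreviation mon :: "'x prim list \<Rightarrow> ('x, 'k::comm_ring_1) opoly" where
  "mon w \<equiv> single w 1"

lemma finite_supp_single: "finite (supp (single w c))"
  by (rule finite_subset[of _ "{w}"]) (auto simp: supp_def single_def)

lemma finite_supp_diff:
  "finite (supp f) \<Longrightarrow> finite (supp g) \<Longrightarrow> finite (supp (f - g :: ('x, 'k::comm_ring_1) opoly))"
  by (rule finite_subset[of _ "supp f \<union> supp g"]) (auto simp: supp_def)

lemma finite_supp_smult: "finite (supp f) \<Longrightarrow> finite (supp (smult c f :: ('x, 'k::comm_ring_1) opoly))"
  by (rule finite_subset[of _ "supp f"]) (auto simp: supp_def smult_def)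

lemma psubst_over_superset:
  assumes "finite A" "supp f \<subseteq> A"
  shows "psubst u f w = (\<Sum>v\<in>{v\<in>A. subst u v = w}. f v)"
  unfolding psubst_def
  by (rule sum.mono_neutral_left) (use assms in \<open>auto simp: supp_def\<close>)

lemma psubst_diff:
  assumes "finite (supp f)" "finite (supp g)"
  shows "psubst u (f - g) = psubst u f - psubst u g"
proof
  fix w
  let ?A = "supp f \<union> supp g"
  have "psubst u (f - g) w = (\<Sum>v\<in>{v\<in>?A. subst u v = w}. f v - g v)"
    using assms by (subst psubst_over_superset[of ?A]) (auto simp: supp_def)
  also have "\<dots> = psubst u f w - psubst u g w"
    using assms by (simp add: sum_subtractf psubst_over_superset[of ?A])
  finally show "psubst u (f - g) w = (psubst u f - psubst u g) w" by simp
qed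

lemma psubst_smult:
  assumes "finite (supp f)"
  shows "psubst u (smult c f) = smult c (psubst u f)"
proof
  fix w
  have "psubst u (smult c f) w = (\<Sum>v\<in>{v\<in>supp f. subst u v = w}. c * f v)"
    using assms by (subst psubst_over_superset[of "supp f"]) (auto simp: supp_def smult_def)
  then show "psubst u (smult c f) w = smult c (psubst u f) w"
    by (simp add: smult_def psubst_def sum_distrib_left)
qed

lemma psubst_single: "psubst u (single w c) = single (subst u w) c"
proof
  fix v
  have "{w'\<in>{w}. subst u w' = v} = (if subst u w = v then {w} else {})" by auto
  moreover have "psubst u (single w c) v = (\<Sum>w'\<in>{w'\<in>{w}. subst u w' = v}. single w c w')"
    by (rule psubst_over_superset) (auto simp: supp_def single_def)
  ultimately show "psubst u (single w c) v = single (subst u w) c v"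
    by (simp add: single_def)
qed

lemma psubst_star: "psubst [Lt None] f = f"
proof
  fix w
  have "{v \<in> supp f. subst [Lt None] v = w} = (if f w = 0 then {} else {w})"
    by (auto simp: supp_def)
  then show "psubst [Lt None] f w = f w" by (simp add: psubst_def)
qed

lemma pmul_single: "pmul (single v c) (single w d) = single (v @ w) (c * d)"
proof
  fix u
  have "{(v', w'). v' \<in> supp (single v c) \<and> w' \<in> supp (single w d) \<and> v' @ w' = u}
        = (if c \<noteq> 0 \<and> d \<noteq> 0 \<and> v @ w = u then {(v, w)} else {})"
    by (auto simp: supp_def single_def)
  then show "pmul (single v c) (single w d) u = single (v @ w) (c * d) u"
    by (auto simp: pmul_def single_def)
qed

lemma Dlin_single: "Dlin (single w c) = single [Dp w] c"
  unfolding Dlin_def single_def by (auto split: list.split prim.split)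

lemma drel_eq:
  "drel lam a b = mon [Dp (a @ b)] - mon (Dp a # b) - mon (a @ [Dp b]) - smult lam (mon [Dp a, Dp b])"
  unfolding drel_def by (simp add: pmul_single Dlin_single)

lemma psubst_drel: "psubst u (drel lam a b) =
    mon (subst u [Dp (a @ b)]) - mon (subst u (Dp a # b)) - mon (subst u (a @ [Dp b]))
    - smult lam (mon (subst u [Dp a, Dp b]))"
  unfolding drel_eq
  by (simp add: psubst_diff psubst_smult psubst_single finite_supp_diff finite_supp_smult
      finite_supp_single del: subst_Cons subst_append)

text \<open>Scalars as constant functions, so that identities in \<open>K\<langle>X;D\<rangle>\<close> become ring
  identities in the function ring and can be checked by \<open>algebra_simps\<close>.\<close>

definition scalar :: "'k \<Rightarrow> ('x, 'k) opoly" where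
  "scalar c = (\<lambda>_. c)"

lemma smult_scalar: "smult c f = scalar c * f"
  and scalar_one: "scalar 1 = 1"
  and scalar_uminus: "scalar (- c) = - scalar c"
  by (auto simp: smult_def scalar_def)

lemma lead_eqI:
  assumes "f w \<noteq> 0" and "\<And>v. f v \<noteq> 0 \<Longrightarrow> v \<noteq> w \<Longrightarrow> word_less v w"
  shows "lead f = w"
  unfolding lead_def
proof (rule the_equality)
  show "f w \<noteq> 0 \<and> (\<forall>v. f v \<noteq> 0 \<longrightarrow> v \<noteq> w \<longrightarrow> word_less v w)" using assms by blast
next
  fix w' assume w': "f w' \<noteq> 0 \<and> (\<forall>v. f v \<noteq> 0 \<longrightarrow> v \<noteq> w' \<longrightarrow> word_less v w')"
  show "w' = w"
  proof (rule ccontr)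
    assume "w' \<noteq> w"
    then have "word_less w w'" "word_less w' w" using assms w' by auto
    then show False using word_less_asym by blast
  qed
qed

lemma lead_drel:
  fixes lam :: "'k::comm_ring_1"
  assumes one: "(1::'k) \<noteq> 0" and a: "is_word a" and b: "is_word b"
  shows "lead (drel lam a b) = [Dp (a @ b)]"
proof (rule lead_eqI)
  let ?lower = "{Dp a # b, a @ [Dp b], [Dp a, Dp b]}"
  have less: "word_less v [Dp (a @ b)]" if "v \<in> ?lower" for v
    using drel_lower_less[OF a b that] .
  have val: "drel lam a b v = (if v = [Dp (a @ b)] then 1 else 0) - (if v = Dp a # b then 1 else 0)
      - (if v = a @ [Dp b] then 1 else 0) - lam * (if v = [Dp a, Dp b] then 1 else 0)" for v
    by (simp add: drel_eq single_def smult_def)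
  have "[Dp (a @ b)] \<notin> ?lower" using less word_less_irrefl by meson
  then show "drel lam a b [Dp (a @ b)] \<noteq> 0" using one by (simp add: val)
  fix v assume "drel lam a b v \<noteq> 0" "v \<noteq> [Dp (a @ b)]"
  then show "word_less v [Dp (a @ b)]" using val[of v] less by (cases "v \<in> ?lower") auto
qed

lemma cong_mod_zero: "cong_mod S w 0 0"
  unfolding cong_mod_def by (rule exI[of _ "[]"]) simp

lemma cong_mod_term:
  assumes "s \<in> S" "star_word u" "word_less (subst u (lead s)) w"
  shows "cong_mod S w (smult \<alpha> (psubst u s)) 0"
  unfolding cong_mod_def using assms by (intro exI[of _ "[(\<alpha>, u, s)]"]) simp

lemma cong_mod_add:
  assumes "cong_mod S w p 0" "cong_mod S w q 0"
  shows "cong_mod S w (p + q) 0"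
proof -
  from assms obtain l l' where
    "\<forall>(\<alpha>, u, s)\<in>set l. s \<in> S \<and> star_word u \<and> word_less (subst u (lead s)) w"
    "p = sum_list (map (\<lambda>(\<alpha>, u, s). smult \<alpha> (psubst u s)) l)"
    "\<forall>(\<alpha>, u, s)\<in>set l'. s \<in> S \<and> star_word u \<and> word_less (subst u (lead s)) w"
    "q = sum_list (map (\<lambda>(\<alpha>, u, s). smult \<alpha> (psubst u s)) l')"
    unfolding cong_mod_def by auto
  then show ?thesis unfolding cong_mod_def by (intro exI[of _ "l @ l'"]) auto
qed

lemma cong_mod_uminus:
  assumes "cong_mod S w p 0"
  shows "cong_mod S w (- p) 0"
proof -
  from assms obtain l where
    l: "\<forall>(\<alpha>, u, s)\<in>set l. s \<in> S \<and> star_word u \<and> word_less (subst u (lead s)) w"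
      "p = sum_list (map (\<lambda>(\<alpha>, u, s). smult \<alpha> (psubst u s)) l)"
    unfolding cong_mod_def by auto
  define l' where "l' = map (\<lambda>(\<alpha>, u, s). (- \<alpha>, u, s)) l"
  have "sum_list (map (\<lambda>(\<alpha>, u, s). smult \<alpha> (psubst u s)) l')
      = - sum_list (map (\<lambda>(\<alpha>, u, s). smult \<alpha> (psubst u s)) l)"
    unfolding l'_def by (induction l) (auto simp: smult_def fun_eq_iff)
  then have "- p = sum_list (map (\<lambda>(\<alpha>, u, s). smult \<alpha> (psubst u s)) l')"
    using l(2) by simp
  moreover have "\<forall>(\<alpha>, u, s)\<in>set l'. s \<in> S \<and> star_word u \<and> word_less (subst u (lead s)) w"
    using l(1) unfolding l'_def by auto
  ultimately show ?thesis unfolding cong_mod_def by auto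
qed

abbreviation drels :: "'k::comm_ring_1 \<Rightarrow> ('x::wellorder, 'k) opoly set" where
  "drels lam \<equiv> {drel lam x y | x y. is_word x \<and> is_word y}"

lemmas subst_eval = subst_Cons subst_append subst_Nil subst_p_Dp subst_p.simps(1) subst_lift
  append.simps append_Nil2 append_assoc

lemmas smult_as_times = smult_scalar scalar_uminus scalar_one

section \<open>Inclusion compositions\<close>

text \<open>Star at top level with overlapping factorizations \<open>(az)b = a(zb)\<close>: the difference
  of the two relations is a combination of substitutions of the relations for \<open>a, z\<close>
  and for \<open>z, b\<close>, whose leading words are the lower words of the two relations.\<close>

lemma overlap_identity:
  fixes lam :: "'k::comm_ring_1"
  shows "drel lam (a @ z) b - drel lam a (z @ b) =
      smult (- 1) (psubst (Lt None # map lift b) (drel lam a z))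
    + smult (- lam) (psubst [Lt None, Dp (map lift b)] (drel lam a z))
    + smult 1 (psubst (map lift a @ [Lt None]) (drel lam z b))
    + smult lam (psubst [Dp (map lift a), Lt None] (drel lam z b))"
  unfolding psubst_drel drel_eq[of lam "a @ z"] drel_eq[of lam a "z @ b"]
  by (simp only: subst_eval) (simp only: smult_as_times, simp add: algebra_simps)

lemma cong_mod_drel_term:
  fixes lam :: "'k::comm_ring_1"
  assumes "(1::'k) \<noteq> 0" "is_word a" "is_word b" "star_word u"
    and "word_less (subst u [Dp (a @ b)]) w"
  shows "cong_mod (drels lam) w (smult \<alpha> (psubst u (drel lam a b))) 0"
  using assms by (intro cong_mod_term) (auto simp: lead_drel)

lemma inclusion_overlap:
  fixes lam :: "'k::comm_ring_1"
  assumes one: "(1::'k) \<noteq> 0" and a: "is_word a" and z: "is_word z" and b: "is_word b"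
  shows "cong_mod (drels lam) [Dp (a @ z @ b)] (drel lam (a @ z) b - drel lam a (z @ b)) 0"
  unfolding overlap_identity
proof (intro cong_mod_add cong_mod_drel_term[OF one])
  have az: "is_word (a @ z)" and zb: "is_word (z @ b)" using a z b by (auto simp: is_word_def)
  show "star_word (Lt None # map lift b)" "star_word [Lt None, Dp (map lift b)]"
    "star_word (map lift a @ [Lt None])" "star_word [Dp (map lift a), Lt None]"
    using a b by (auto simp: star_word_def is_word_def lift_props)
  have "word_less (Dp (a @ z) # b) [Dp (a @ z @ b)]"
    "word_less [Dp (a @ z), Dp b] [Dp (a @ z @ b)]"
    "word_less (a @ [Dp (z @ b)]) [Dp (a @ z @ b)]"
    "word_less [Dp a, Dp (z @ b)] [Dp (a @ z @ b)]"
    using drel_lower_less[OF az b] drel_lower_less[OF a zb] by auto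
  then show "word_less (subst (Lt None # map lift b) [Dp (a @ z)]) [Dp (a @ z @ b)]"
    "word_less (subst [Lt None, Dp (map lift b)] [Dp (a @ z)]) [Dp (a @ z @ b)]"
    "word_less (subst (map lift a @ [Lt None]) [Dp (z @ b)]) [Dp (a @ z @ b)]"
    "word_less (subst [Dp (map lift a), Lt None] [Dp (z @ b)]) [Dp (a @ z @ b)]"
    by simp_all
qed (use a z b in simp_all)

text \<open>Star inside the \<open>D\<close>: \<open>u = D(v\<^sub>1v\<^sub>2)\<close> with \<open>x = v\<^sub>1|_{D(x'y')}\<close> and
  \<open>y = v\<^sub>2|_{D(x'y')}\<close>.  Replacing \<open>D(x'y')\<close> in \<open>x\<close> and \<open>y\<close> by the relation for \<open>x', y'\<close>
  and expanding gives this identity, whatever the position of \<open>\<star>\<close>; the relations on the right are for the pairs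
  \<open>(v\<^sub>1|_L, v\<^sub>2|_L)\<close>, \<open>L\<close> a lower word of the relation for \<open>x', y'\<close>, and the
  remaining substitutions are those of \<open>D(v\<^sub>1)v\<^sub>2\<close>, \<open>v\<^sub>1D(v\<^sub>2)\<close>, \<open>D(v\<^sub>1)D(v\<^sub>2)\<close>.\<close>

lemma inner_identity:
  fixes lam :: "'k::comm_ring_1"
  assumes hx: "subst v1 [Dp (x' @ y')] = x" and hy: "subst v2 [Dp (x' @ y')] = y"
  shows "drel lam x y - psubst [Dp (v1 @ v2)] (drel lam x' y') =
      smult 1 (psubst [Lt None] (drel lam (subst v1 (Dp x' # y')) (subst v2 (Dp x' # y'))))
    + smult 1 (psubst [Lt None] (drel lam (subst v1 (x' @ [Dp y'])) (subst v2 (x' @ [Dp y']))))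
    + smult lam (psubst [Lt None] (drel lam (subst v1 [Dp x', Dp y']) (subst v2 [Dp x', Dp y'])))
    + smult (- 1) (psubst (Dp v1 # v2) (drel lam x' y'))
    + smult (- 1) (psubst (v1 @ [Dp v2]) (drel lam x' y'))
    + smult (- lam) (psubst [Dp v1, Dp v2] (drel lam x' y'))"
  unfolding psubst_star psubst_drel unfolding drel_eq
  by (simp only: subst_eval hx hy) (simp only: smult_as_times, simp add: algebra_simps)

lemma star_word_star: "star_word [Lt None]"
  by (simp add: star_word_def is_word_def)

text \<open>All leading words on the right of the identity are below \<open>D(xy)\<close>: for the first three
  terms by compatibility of the order with substitution, for the last three because they
  are the lower words of the relation for \<open>x, y\<close>.\<close>

lemma inclusion_inner:
  fixes lam :: "'k::comm_ring_1"
  assumes one: "(1::'k) \<noteq> 0" and x': "is_word x'" and y': "is_word y'"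
    and v1: "is_word v1" and v2: "is_word v2" and u: "star_word [Dp (v1 @ v2)]"
    and hx: "subst v1 [Dp (x' @ y')] = x" and hy: "subst v2 [Dp (x' @ y')] = y"
  shows "cong_mod (drels lam) [Dp (x @ y)] (drel lam x y - psubst [Dp (v1 @ v2)] (drel lam x' y')) 0"
proof -
  let ?lower = "{Dp x' # y', x' @ [Dp y'], [Dp x', Dp y']}"
  have x'y': "is_word [Dp (x' @ y')]" using x' y' by (auto simp: is_word_def)
  have x: "is_word x" and y: "is_word y"
    using is_word_subst[OF v1 x'y'] is_word_subst[OF v2 x'y'] hx hy by simp_all
  have "is_word L" if "L \<in> ?lower" for L
    using that x' y' by (auto simp: is_word_def)
  then have lower_words: "is_word (subst v1 L)" "is_word (subst v2 L)" if "L \<in> ?lower" for L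
    using that is_word_subst v1 v2 by blast+
  have stars: "star_word (Dp v1 # v2)" "star_word (v1 @ [Dp v2])" "star_word [Dp v1, Dp v2]"
    using u v1 v2 by (auto simp: star_word_def is_word_def)
  have "word_less (subst [Dp (v1 @ v2)] L) (subst [Dp (v1 @ v2)] [Dp (x' @ y')])"
    if "L \<in> ?lower" for L
    using drel_lower_words[OF x' y' that] word_less_subst[OF u] by blast
  then have inner_less: "word_less [Dp (subst v1 L @ subst v2 L)] [Dp (x @ y)]" if "L \<in> ?lower" for L
    using that hx hy by simp
  have outer_less: "word_less (subst (Dp v1 # v2) [Dp (x' @ y')]) [Dp (x @ y)]"
    "word_less (subst (v1 @ [Dp v2]) [Dp (x' @ y')]) [Dp (x @ y)]"
    "word_less (subst [Dp v1, Dp v2] [Dp (x' @ y')]) [Dp (x @ y)]"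
    using drel_lower_less[OF x y] hx hy by auto
  show ?thesis
    unfolding inner_identity[OF hx hy]
    by (intro cong_mod_add cong_mod_drel_term[OF one])
      (simp_all only: x' y' lower_words stars star_word_star inner_less outer_less
        subst_star insert_iff simp_thms)
qed

text \<open>Star at top level: \<open>xy = x'y'\<close>, so one factorization refines the other.\<close>

lemma inclusion_top:
  fixes lam :: "'k::comm_ring_1"
  assumes one: "(1::'k) \<noteq> 0" and x: "is_word x" and y: "is_word y"
    and x': "is_word x'" and y': "is_word y'" and eq: "x @ y = x' @ y'"
  shows "cong_mod (drels lam) [Dp (x @ y)] (drel lam x y - drel lam x' y') 0"
proof -
  obtain z where "x = x' @ z \<and> y' = z @ y \<or> x' = x @ z \<and> y = z @ y'"
    using eq by (auto simp: append_eq_append_conv2)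
  then show ?thesis
  proof
    assume split: "x = x' @ z \<and> y' = z @ y"
    show ?thesis
    proof (cases "z = []")
      case False
      then have "is_word z" using x split by (auto simp: is_word_def)
      then show ?thesis using inclusion_overlap[OF one x' _ y] split by simp
    qed (use split cong_mod_zero in simp)
  next
    assume split: "x' = x @ z \<and> y = z @ y'"
    show ?thesis
    proof (cases "z = []")
      case False
      then have "is_word z" using y split by (auto simp: is_word_def)
      then show ?thesis using cong_mod_uminus[OF inclusion_overlap[OF one x _ y']] split by simp
    qed (use split cong_mod_zero in simp)
  qed
qed

text \<open>Since \<open>D(x'y')\<close> has one
  prime factor, the star word \<open>u\<close> is a single prime: either \<open>\<star>\<close> itself or \<open>D(u')\<close>,
  and \<open>u'\<close> splits along \<open>xy\<close>.\<close>

lemma inclusion_composition: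
  fixes lam :: "'k::comm_ring_1"
  assumes one: "(1::'k) \<noteq> 0" and x: "is_word x" and y: "is_word y"
    and x': "is_word x'" and y': "is_word y'"
    and u: "star_word u" and eq: "[Dp (x @ y)] = subst u [Dp (x' @ y')]"
  shows "cong_mod (drels lam) [Dp (x @ y)] (drel lam x y - psubst u (drel lam x' y')) 0"
proof -
  have "length u = 1" using arg_cong[OF eq, of length] subst_as_map[of "[Dp (x' @ y')]" u] by simp
  then obtain p where u_p: "u = [p]" by (auto simp: length_Suc_conv)
  show ?thesis
  proof (cases p)
    case (Lt c)
    then have "c = None" using eq u_p by (cases c) auto
    then show ?thesis
      using inclusion_top[OF one x y x' y'] eq u_p Lt by (simp add: psubst_star)
  next
    case (Dp u')
    have "subst u' [Dp (x' @ y')] = x @ y" using eq u_p Dp by simp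
    with subst_split obtain v1 v2 where v: "u' = v1 @ v2"
      and hx: "subst v1 [Dp (x' @ y')] = x" and hy: "subst v2 [Dp (x' @ y')] = y"
      by (metis One_nat_def length_Cons list.size(3))
    have "is_word v1" "is_word v2"
      using u x y hx hy unfolding u_p Dp v star_word_def is_word_def by auto
    then show ?thesis
      using inclusion_inner[OF one x' y' _ _ _ hx hy] u unfolding u_p Dp v by simp
  qed
qed

text \<open>Over the zero ring everything is zero, so the claim is trivial.\<close>

lemma cong_mod_trivial_ring:
  assumes "(1::'k::comm_ring_1) = 0"
  shows "cong_mod S w (p :: ('x::wellorder, 'k) opoly) 0"
proof -
  have "p = 0"
  proof
    fix w show "p w = 0 w" using assms by (metis mult_1 mult_zero_left zero_fun_apply)
  qed
  then show ?thesis using cong_mod_zero by simp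
qed

text \<open>Intersection compositions do not exist since leading words have a single prime
  factor; inclusion compositions are handled above.\<close>

theorem theorem5p3:
  fixes lam :: "'k::comm_ring_1"
  shows "GSB {drel lam x y | x y :: 'x::wellorder prim list. is_word x \<and> is_word y}"
proof (cases "(1::'k) = 0")
  case True
  then show ?thesis unfolding GSB_def using cong_mod_trivial_ring by blast
next
  case one: False
  have member: "\<exists>x y. f = drel lam x y \<and> is_word x \<and> is_word y \<and> lead f = [Dp (x @ y)]"
    if "f \<in> drels lam" for f :: "('x, 'k) opoly"
    using that lead_drel[OF one] by blast
  show ?thesis unfolding GSB_def
  proof (intro ballI conjI allI impI)
    fix f g :: "('x, 'k) opoly" and w a b :: "'x prim list"
    assume "f \<in> drels lam" "g \<in> drels lam" and overlap: "is_word a \<and> is_word b \<and> w = lead f @ a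
      \<and> w = b @ lead g \<and> length w < length (lead f) + length (lead g)"
    then have "length (lead f) = 1" "length (lead g) = 1" using member by fastforce+
    with overlap have False by (auto simp: is_word_def)
    then show "cong_mod (drels lam) w (pmul f (single a 1) - pmul (single b 1) g) 0" ..
  next
    fix f g :: "('x, 'k) opoly" and u
    assume f_mem: "f \<in> drels lam" and g_mem: "g \<in> drels lam"
      and u: "star_word u \<and> lead f = subst u (lead g)"
    obtain x y where f: "f = drel lam x y" "is_word x" "is_word y" "lead f = [Dp (x @ y)]"
      using member[OF f_mem] by blast
    obtain x' y' where g: "g = drel lam x' y'" "is_word x'" "is_word y'" "lead g = [Dp (x' @ y')]"
      using member[OF g_mem] by blast
    have "[Dp (x @ y)] = subst u [Dp (x' @ y')]" using u f(4) g(4) by simp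
    then show "cong_mod (drels lam) (lead f) (f - psubst u g) 0"
      using inclusion_composition[OF one f(2,3) g(2,3)] u unfolding f(4) unfolding f(1) g(1) by blast
  qed
qed

end
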